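(* Let $\alpha>0$ and let $f$ be defined by $x^\alpha+X^\alpha+f(x,X)^\alpha=1$, i.e. $f(x,X)=(1-x^\alpha-X^\alpha)^{1/\alpha}$ (for $\alpha=1$, $f(x,X)=1-x-X$), on a domain where the following maps are defined. Let $$S(x,X;y,Y)=(u,U;v,V)=\Big(\frac{x}{f(v,V)},\;X\frac{f(y,Y)}{f(v,V)};\;Xy,\;XY\Big),$$ let $\phi(x,X)=\big(f(x,X)/x,\;X/x\big)$, whose inverse is $\phi^{-1}(x,X)=\big((1+x^\alpha+X^\alpha)^{-1/\alpha},\;X(1+x^\alpha+X^\alpha)^{-1/\alpha}\big)$, and let $$S^{xY}(x,X;y,Y)=\Big(x,\;\frac{Xy}{(1+y^\alpha+Y^\alpha)^{1/\alpha}};\;\frac{\big((1+x^\alpha)(1+y^\alpha+Y^\alpha)+X^\alpha y^\alpha\big)^{1/\alpha}}{X},\;Y\Big).$$ Then $(\phi\times\phi)\circ S\circ(\phi^{-1}\times\phi^{-1})=S^{xY}$; i.e. $S$ is $(\mathrm{M\ddot ob})^2$ equivalent to the parametric map $S^{xY}$, which leaves the first and fourth components invariant.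
   Context: Two maps $S,\widehat S:\mathcal X^2\times\mathcal X^2\to\mathcal X^2\times\mathcal X^2$ are $(\mathrm{M\ddot ob})^2$ equivalent if there exists a birational map $\psi:\mathcal X^2\to\mathcal X^2$ with $S\circ(\psi\times\psi)=(\psi\times\psi)\circ\widehat S$ (here $\psi=\phi^{-1}$). *)

theory Defs
  imports Complex_Main
begin

definition fa :: "real \<Rightarrow> real \<Rightarrow> real \<Rightarrow> real" where
  "fa a x X = (1 - x powr a - X powr a) powr (1 / a)"

definition S_map :: "real \<Rightarrow> (real \<times> real) \<times> (real \<times> real) \<Rightarrow> (real \<times> real) \<times> (real \<times> real)" where
  "S_map a p = (let ((x, X), (y, Y)) = p; v = X * y; V = X * Y in
     ((x / fa a v V, X * fa a y Y / fa a v V), (v, V)))"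

definition phi :: "real \<Rightarrow> real \<times> real \<Rightarrow> real \<times> real" where
  "phi a p = (let (x, X) = p in (fa a x X / x, X / x))"

definition phi_inv :: "real \<Rightarrow> real \<times> real \<Rightarrow> real \<times> real" where
  "phi_inv a p = (let (x, X) = p in
     ((1 + x powr a + X powr a) powr (- 1 / a), X * (1 + x powr a + X powr a) powr (- 1 / a)))"

definition S_xY :: "real \<Rightarrow> (real \<times> real) \<times> (real \<times> real) \<Rightarrow> (real \<times> real) \<times> (real \<times> real)" where
  "S_xY a p = (let ((x, X), (y, Y)) = p in
     ((x, X * y / (1 + y powr a + Y powr a) powr (1 / a)),
      (((1 + x powr a) * (1 + y powr a + Y powr a) + X powr a * y powr a) powr (1 / a) / X, Y)))"

definition prod_map2 :: "('a \<Rightarrow> 'b) \<Rightarrow> 'a \<times> 'a \<Rightarrow> 'b \<times> 'b" where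
  "prod_map2 g p = (g (fst p), g (snd p))"

end

theory Submission
  imports Defs
begin

text \<open>Rather than conjugating S by \<open>\<phi>\<close>, we show
  \<open>S \<circ> (\<phi>\<^sup>-\<^sup>1 \<times> \<phi>\<^sup>-\<^sup>1) = (\<phi>\<^sup>-\<^sup>1 \<times> \<phi>\<^sup>-\<^sup>1) \<circ> S\<^sup>x\<^sup>Y\<close> and use \<open>\<phi> \<circ> \<phi>\<^sup>-\<^sup>1 = id\<close>.
  Here \<open>\<phi>\<^sup>-\<^sup>1(x,X) = (p, X p)\<close> with \<open>p\<^sup>-\<^sup>a = 1 + x\<^sup>a + X\<^sup>a\<close>, so \<open>f(p, X p) = x p\<close>.
  Apart from this, the only identity needed is
  \<open>(1 + x\<^sup>a + X\<^sup>a)(1 + y\<^sup>a + Y\<^sup>a) = X\<^sup>a(1 + Y\<^sup>a) + G\<^sup>a\<close>, where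
  \<open>G\<^sup>a = (1 + x\<^sup>a)(1 + y\<^sup>a + Y\<^sup>a) + X\<^sup>a y\<^sup>a\<close> is the radicand in the third
  component of \<open>S\<^sup>x\<^sup>Y\<close>: it gives both \<open>f(v,V) = G p q\<close> and the fourth component.\<close>

definition phi_inv_scale :: "real \<Rightarrow> real \<Rightarrow> real \<Rightarrow> real" where
  "phi_inv_scale a x X = (1 + x powr a + X powr a) powr (- 1 / a)"

lemma one_add_powr_add_powr_pos: "0 < 1 + x powr a + (X :: real) powr a"
  by (simp add: add_pos_nonneg)

lemma phi_inv_eq: "phi_inv a (x, X) = (phi_inv_scale a x X, X * phi_inv_scale a x X)"
  by (simp add: phi_inv_def phi_inv_scale_def)

lemma phi_inv_scale_pos: "0 < phi_inv_scale a x X"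
  unfolding phi_inv_scale_def using one_add_powr_add_powr_pos[of x a X] by simp

lemma phi_inv_scale_powr:
  assumes "a \<noteq> 0"
  shows "phi_inv_scale a x X powr a = 1 / (1 + x powr a + X powr a)"
  using assms one_add_powr_add_powr_pos[of x a X]
  by (simp add: phi_inv_scale_def powr_powr powr_minus_divide powr_divide)

lemma phi_inv_scale_eqI:
  assumes "0 < a" "0 < c" "c powr a * (1 + x powr a + X powr a) = 1"
  shows "phi_inv_scale a x X = c"
proof -
  have "c = (c powr a) powr (1 / a)"
    using assms by (simp add: powr_powr)
  also have "c powr a = 1 / (1 + x powr a + X powr a)"
    using assms(3) one_add_powr_add_powr_pos[of x a X] by (simp add: eq_divide_eq mult.commute)
  finally show ?thesis
    using one_add_powr_add_powr_pos[of x a X]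
    by (simp add: phi_inv_scale_def powr_minus_divide powr_divide)
qed

lemma fa_eqI:
  assumes "0 < a" "0 \<le> c" "u powr a + w powr a + c powr a = 1"
  shows "fa a u w = c"
proof -
  have "1 - u powr a - w powr a = c powr a"
    using assms(3) by simp
  then show ?thesis
    using assms(1,2) by (simp add: fa_def powr_powr)
qed

lemma fa_phi_inv_scale:
  assumes "0 < a" "0 \<le> x" "0 \<le> X"
  shows "fa a (phi_inv_scale a x X) (X * phi_inv_scale a x X) = x * phi_inv_scale a x X"
proof (rule fa_eqI)
  let ?s = "phi_inv_scale a x X" and ?D = "1 + x powr a + X powr a"
  have "?s powr a + (X * ?s) powr a + (x * ?s) powr a = (1 + X powr a + x powr a) / ?D"
    using assms phi_inv_scale_pos[of a x X]
    by (simp add: powr_mult phi_inv_scale_powr add_divide_distrib)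
  also have "\<dots> = 1"
    using one_add_powr_add_powr_pos[of x a X] by simp
  finally show "?s powr a + (X * ?s) powr a + (x * ?s) powr a = 1" .
qed (use assms phi_inv_scale_pos[of a x X] in simp_all)

lemma phi_phi_inv:
  assumes "0 < a" "0 \<le> x" "0 \<le> X"
  shows "phi a (phi_inv a (x, X)) = (x, X)"
  using assms phi_inv_scale_pos[of a x X]
  by (simp add: phi_inv_eq phi_def fa_phi_inv_scale)

definition S_xY_root :: "real \<Rightarrow> real \<Rightarrow> real \<Rightarrow> real \<Rightarrow> real \<Rightarrow> real" where
  "S_xY_root a x X y Y =
     ((1 + x powr a) * (1 + y powr a + Y powr a) + X powr a * y powr a) powr (1 / a)"

lemma S_xY_root_radicand_pos:
  "0 < (1 + x powr a) * (1 + y powr a + Y powr a) + (X :: real) powr a * y powr a"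
  by (intro add_pos_nonneg mult_pos_pos one_add_powr_add_powr_pos) (simp_all add: add_pos_nonneg)

lemma S_xY_root_pos: "0 < S_xY_root a x X y Y"
  using S_xY_root_radicand_pos[of x a y Y X] by (simp add: S_xY_root_def)

lemma S_xY_root_powr:
  assumes "0 < a"
  shows "S_xY_root a x X y Y powr a
           = (1 + x powr a) * (1 + y powr a + Y powr a) + X powr a * y powr a"
  using assms S_xY_root_radicand_pos[of x a y Y X] by (simp add: S_xY_root_def powr_powr)

lemma S_xY_eq:
  "S_xY a ((x, X), (y, Y))
     = ((x, X * y * phi_inv_scale a y Y), (S_xY_root a x X y Y / X, Y))"
  by (simp add: S_xY_def S_xY_root_def phi_inv_scale_def powr_minus_divide)

lemma phi_inv_scale_prod_powr:
  fixes a x X y Y :: real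
  defines "p \<equiv> phi_inv_scale a x X" and "q \<equiv> phi_inv_scale a y Y"
    and "G \<equiv> S_xY_root a x X y Y"
  assumes "0 < a"
  shows "(p * q) powr a * (X powr a * (1 + Y powr a) + G powr a) = 1"
proof -
  have "X powr a * (1 + Y powr a) + G powr a = (1 + x powr a + X powr a) * (1 + y powr a + Y powr a)"
    using assms by (simp add: G_def S_xY_root_powr algebra_simps)
  then show ?thesis
    using assms phi_inv_scale_pos one_add_powr_add_powr_pos[of x a X] one_add_powr_add_powr_pos[of y a Y]
    by (simp add: powr_mult phi_inv_scale_powr)
qed

lemma fa_S_map_denominator:
  fixes a x X y Y :: real
  defines "p \<equiv> phi_inv_scale a x X" and "q \<equiv> phi_inv_scale a y Y"
    and "G \<equiv> S_xY_root a x X y Y"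
  assumes "0 < a" "0 \<le> X" "0 \<le> Y"
  shows "fa a (X * p * q) (X * p * (Y * q)) = G * p * q"
proof (rule fa_eqI)
  have "0 < p" "0 < q" "0 < G"
    using assms by (simp_all add: phi_inv_scale_pos S_xY_root_pos)
  then show "(X * p * q) powr a + (X * p * (Y * q)) powr a + (G * p * q) powr a = 1"
    using assms phi_inv_scale_prod_powr[OF assms(4), of x X y Y]
    by (simp add: powr_mult algebra_simps)
  show "0 \<le> G * p * q"
    using assms by (simp add: phi_inv_scale_pos S_xY_root_pos less_imp_le)
qed (fact assms)

lemma phi_inv_scale_S_xY_fst:
  fixes a x X y Y :: real
  defines "q \<equiv> phi_inv_scale a y Y" and "G \<equiv> S_xY_root a x X y Y"
  assumes "0 < a" "0 \<le> X" "0 \<le> y"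
  shows "phi_inv_scale a x (X * y * q) = 1 / (G * q)"
proof (rule phi_inv_scale_eqI)
  define D where "D = 1 + y powr a + Y powr a"
  have pos: "0 < q" "0 < G" "0 < D"
    using assms by (simp_all add: phi_inv_scale_pos S_xY_root_pos D_def one_add_powr_add_powr_pos)
  have "q powr a = 1 / D"
    using assms by (simp add: D_def phi_inv_scale_powr)
  then have "(1 / (G * q)) powr a * (1 + x powr a + (X * y * q) powr a)
      = ((1 + x powr a) * D + X powr a * y powr a) / G powr a"
    using assms(3-5) pos by (simp add: powr_mult powr_divide field_simps)
  then show "(1 / (G * q)) powr a * (1 + x powr a + (X * y * q) powr a) = 1"
    using pos S_xY_root_powr[OF assms(3), of x X y Y, folded G_def D_def, symmetric]
    by simp
  show "0 < 1 / (G * q)"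
    using pos by simp
qed (fact assms)

lemma phi_inv_scale_S_xY_snd:
  fixes a x X y Y :: real
  defines "p \<equiv> phi_inv_scale a x X" and "q \<equiv> phi_inv_scale a y Y"
    and "G \<equiv> S_xY_root a x X y Y"
  assumes "0 < a" "0 < X"
  shows "phi_inv_scale a (G / X) Y = X * p * q"
proof (rule phi_inv_scale_eqI)
  have "0 < p" "0 < q" "0 < G"
    using assms by (simp_all add: phi_inv_scale_pos S_xY_root_pos)
  then show "(X * p * q) powr a * (1 + (G / X) powr a + Y powr a) = 1"
    using assms phi_inv_scale_prod_powr[OF assms(4), of x X y Y]
    by (simp add: powr_mult powr_divide field_simps)
  show "0 < X * p * q"
    using assms by (simp add: phi_inv_scale_pos)
qed (fact assms)

lemma S_map_phi_inv:
  assumes "0 < a" "0 < x" "0 < X" "0 < y" "0 < Y"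
  shows "S_map a (prod_map2 (phi_inv a) ((x, X), (y, Y)))
           = prod_map2 (phi_inv a) (S_xY a ((x, X), (y, Y)))"
proof -
  define p where "p = phi_inv_scale a x X"
  define q where "q = phi_inv_scale a y Y"
  define G where "G = S_xY_root a x X y Y"
  have pos: "0 < p" "0 < q" "0 < G"
    using assms by (simp_all add: p_def q_def G_def phi_inv_scale_pos S_xY_root_pos)
  have "S_map a (prod_map2 (phi_inv a) ((x, X), (y, Y)))
      = ((p / (G * p * q), X * p * (y * q) / (G * p * q)), (X * p * q, X * p * (Y * q)))"
    using assms fa_S_map_denominator[of a X Y x y] fa_phi_inv_scale[of a y Y]
    by (simp add: prod_map2_def phi_inv_eq S_map_def p_def q_def G_def)
  also have "\<dots> = prod_map2 (phi_inv a) ((x, X * y * q), (G / X, Y))"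
    using assms pos phi_inv_scale_S_xY_fst[of a X y x Y] phi_inv_scale_S_xY_snd[of a X x y Y]
    by (simp add: prod_map2_def phi_inv_eq p_def q_def G_def field_simps)
  finally show ?thesis
    by (simp add: S_xY_eq q_def G_def)
qed

theorem mainTheorem9:
  fixes a x X y Y :: real
  assumes "a > 0" and "x > 0" and "X > 0" and "y > 0" and "Y > 0"
  shows "(prod_map2 (phi a) \<circ> S_map a \<circ> prod_map2 (phi_inv a)) ((x, X), (y, Y))
           = S_xY a ((x, X), (y, Y))"
proof -
  obtain u U v V where S: "S_xY a ((x, X), (y, Y)) = ((u, U), (v, V))"
    by (metis prod.exhaust)
  have "0 \<le> u" "0 \<le> U" "0 \<le> v" "0 \<le> V"
    using S assms by (auto simp: S_xY_def)
  then show ?thesis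
    unfolding comp_def S_map_phi_inv[OF assms] S using assms
    by (simp add: prod_map2_def phi_phi_inv)
qed

end
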